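(* For all $n,k\in\mathbb{N}$ with $k\ge1$ and $n\ge k+2$, we have $\tau_{n,k}^2<\delta_{n,k}^2=A_{n,k}B_{n,k}$, where $$A_{n,k}=\frac{((2k-1)!!)^2}{k^{2k}}\sum_{m=0}^{k-1}\frac{c_{m,k}}{k^{2m}}\,\frac{n^{2m}}{(n^2-1^2)\cdots(n^2-m^2)},\qquad B_{n,k}=\frac{n^{2k}}{n^2(n^2-1^2)\cdots(n^2-(k-1)^2)},$$ with $c_{0,k}=1$ and $c_{m,k}=\binom{k-1+m}{2m}((2m-1)!!)^2$ for $m\ge1$ (the empty product for $m=0$ being $1$).
   Context: $T_n$ denotes the Chebyshev polynomial of the first kind of degree $n$, $T_n(\cos\theta)=\cos n\theta$. For integers $n\ge k+2$, $k\ge 1$, let $\omega_{n,k}$ be the rightmost (largest) zero of $T_n^{(k+1)}$ and define $\tau_{n,k}:=|T_n^{(k)}(\omega_{n,k})|/T_n^{(k)}(1)$. Let $S_n(x):=\frac1n\sqrt{1-x^2}\,T_n'(x)$ and $D_{n,k}(x):=\big([T_n^{(k)}(x)]^2+[S_n^{(k)}(x)]^2\big)^{1/2}$ for $x\in(-1,1)$. With $x_k:=(1-k^2/n^2)^{1/2}$, set $\delta_{n,k}:=D_{n,k}(x_k)/T_n^{(k)}(1)$. *)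

theory Defs
  imports "HOL-Analysis.Analysis" "HOL-Computational_Algebra.Polynomial"
begin

text \<open>Chebyshev polynomials of the first kind, via the three-term recurrence
  T_0 = 1, T_1 = x, T_(n+2) = 2 x T_(n+1) - T_n (so that T_n(cos t) = cos(n t)).\<close>
fun cheb :: "nat \<Rightarrow> real poly" where
  "cheb 0 = 1"
| "cheb (Suc 0) = [:0, 1:]"
| "cheb (Suc (Suc n)) = smult 2 [:0, 1:] * cheb (Suc n) - cheb n"

definition chebD :: "nat \<Rightarrow> nat \<Rightarrow> real \<Rightarrow> real" where
  "chebD n k x = poly ((pderiv ^^ k) (cheb n)) x"

definition omega :: "nat \<Rightarrow> nat \<Rightarrow> real" where
  "omega n k = Max {x::real. poly ((pderiv ^^ (k + 1)) (cheb n)) x = 0}"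

definition tau :: "nat \<Rightarrow> nat \<Rightarrow> real" where
  "tau n k = \<bar>chebD n k (omega n k)\<bar> / chebD n k 1"

definition chebS :: "nat \<Rightarrow> real \<Rightarrow> real" where
  "chebS n x = (1 / real n) * sqrt (1 - x\<^sup>2) * poly (pderiv (cheb n)) x"

definition chebDD :: "nat \<Rightarrow> nat \<Rightarrow> real \<Rightarrow> real" where
  "chebDD n k x = sqrt ((chebD n k x)\<^sup>2 + ((deriv ^^ k) (chebS n) x)\<^sup>2)"

definition xk :: "nat \<Rightarrow> nat \<Rightarrow> real" where
  "xk n k = sqrt (1 - (real k)\<^sup>2 / (real n)\<^sup>2)"

definition delta :: "nat \<Rightarrow> nat \<Rightarrow> real" where
  "delta n k = chebDD n k (xk n k) / chebD n k 1"

fun dfact :: "nat \<Rightarrow> nat" where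
  "dfact 0 = 1"
| "dfact (Suc 0) = 1"
| "dfact (Suc (Suc m)) = Suc (Suc m) * dfact m"

definition ccoef :: "nat \<Rightarrow> nat \<Rightarrow> real" where
  "ccoef m k = (if m = 0 then 1
               else real ((k - 1 + m) choose (2 * m)) * (real (dfact (2 * m - 1)))\<^sup>2)"

definition Acoef :: "nat \<Rightarrow> nat \<Rightarrow> real" where
  "Acoef n k = (real (dfact (2 * k - 1)))\<^sup>2 / (real k) ^ (2 * k) *
     (\<Sum>m = 0..<k. ccoef m k / (real k) ^ (2 * m) *
        ((real n) ^ (2 * m) / (\<Prod>j = 1..m. (real n)\<^sup>2 - (real j)\<^sup>2)))"

definition Bcoef :: "nat \<Rightarrow> nat \<Rightarrow> real" where
  "Bcoef n k = (real n) ^ (2 * k) /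
     ((real n)\<^sup>2 * (\<Prod>j = 1..k - 1. (real n)\<^sup>2 - (real j)\<^sup>2))"

end

theory Submission
  imports Defs
begin

text \<open>Both f_j = T_n^(j) and f_j = S_n^(j) satisfy the three-term relation
  (1 - x^2) f_(j+2) = (2j + 1) x f_(j+1) - (n^2 - j^2) f_j. Consequently the squared envelope
  D_(n,k)^2 = (T_n^(k))^2 + (S_n^(k))^2 and the cross term T_n^(k) T_n^(k+1) + S_n^(k) S_n^(k+1)
  obey a closed recurrence in k, which starts from the Pell identity D_(n,1)^2 = n^2 / (1 - x^2).
  Its solution is n^2 times a polynomial with nonnegative coefficients in y = 1 / (1 - x^2); at x_k,
  where y = n^2 / k^2, it evaluates to A_(n,k) B_(n,k), and it increases with |x|.

  The largest zero omega of T_n^(k+1) lies in [0, x_k): it is nonnegative by parity, and a zero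
  z >= x_k is excluded by a maximum argument for (1 - x^2)^(k+1) (T_n^(k+1))^2 on [z, 1]. Hence
  tau^2 <= D_(n,k)(omega)^2 / T_n^(k)(1)^2 < D_(n,k)(x_k)^2 / T_n^(k)(1)^2 = delta^2.\<close>

section \<open>Chebyshev polynomials\<close>

abbreviation T :: "nat \<Rightarrow> real \<Rightarrow> real" where "T n x \<equiv> poly (cheb n) x"
abbreviation T' :: "nat \<Rightarrow> real \<Rightarrow> real" where "T' n x \<equiv> poly (pderiv (cheb n)) x"
abbreviation T'' :: "nat \<Rightarrow> real \<Rightarrow> real" where "T'' n x \<equiv> poly (pderiv (pderiv (cheb n))) x"

lemma poly_cheb_Suc_Suc: "T (Suc (Suc n)) x = 2 * x * T (Suc n) x - T n x"
  by (simp add: algebra_simps)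

lemma poly_pderiv_cheb_Suc_Suc: "T' (Suc (Suc n)) x = 2 * T (Suc n) x + 2 * x * T' (Suc n) x - T' n x"
  by (simp add: pderiv_mult pderiv_diff pderiv_smult pderiv_pCons algebra_simps)

lemma cheb_at_1: "T n 1 = 1"
proof -
  have "T n 1 = 1 \<and> T (Suc n) 1 = 1"
    by (induction n) (simp_all add: poly_cheb_Suc_Suc)
  then show ?thesis ..
qed

lemma cheb_minus: "T n (- x) = (-1) ^ n * T n x"
  by (induction n rule: cheb.induct) (simp_all add: algebra_simps)

lemma degree_cheb: "degree (cheb n) \<le> n"
proof (induction n rule: cheb.induct)
  case (3 n)
  have "degree (smult 2 [:0, 1:] * cheb (Suc n)) \<le> Suc (Suc n)"
    using degree_mult_le[of "smult 2 [:0, 1::real:]" "cheb (Suc n)"] 3 by simp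
  moreover have "degree (cheb n) \<le> Suc (Suc n)" using 3 by simp
  ultimately show ?case by (simp only: cheb.simps(3) degree_diff_le)
qed simp_all

lemma cheb_pderiv_Suc: "(1 - x\<^sup>2) * T' (Suc n) x = real (Suc n) * (T n x - x * T (Suc n) x)"
proof (induction n rule: nat_less_induct)
  case (1 n)
  consider "n = 0" | "n = 1" | l where "n = Suc (Suc l)"
    by (metis One_nat_def not0_implies_Suc)
  then show ?case
  proof cases
    case 3
    have IH: "(1 - x\<^sup>2) * T' (Suc l) x = real (Suc l) * (T l x - x * T (Suc l) x)"
      "(1 - x\<^sup>2) * T' (Suc (Suc l)) x = real (Suc (Suc l)) * (T (Suc l) x - x * T (Suc (Suc l)) x)"
      using 1 3 by auto
    have "(1 - x\<^sup>2) * T' (Suc (Suc (Suc l))) x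
        = 2 * (1 - x\<^sup>2) * T (Suc (Suc l)) x + 2 * x * ((1 - x\<^sup>2) * T' (Suc (Suc l)) x)
          - (1 - x\<^sup>2) * T' (Suc l) x"
      by (simp only: poly_pderiv_cheb_Suc_Suc) (simp add: algebra_simps)
    also have "\<dots> = real (Suc (Suc (Suc l))) * (T (Suc (Suc l)) x - x * T (Suc (Suc (Suc l))) x)"
      unfolding IH poly_cheb_Suc_Suc[of "Suc l"] poly_cheb_Suc_Suc[of l]
      by (simp add: algebra_simps power2_eq_square)
    finally show ?thesis using 3 by simp
  qed (simp_all add: numeral_2_eq_2 pderiv_pCons pderiv_diff pderiv_smult algebra_simps power2_eq_square)
qed

lemma cheb_pderiv: "(1 - x\<^sup>2) * T' n x = real n * (x * T n x - T (Suc n) x)"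
proof (cases n)
  case (Suc m)
  then show ?thesis using cheb_pderiv_Suc[of x m] poly_cheb_Suc_Suc[of m x] by (simp add: algebra_simps)
qed simp

text \<open>Differentiating cheb_pderiv and eliminating T' (Suc n) with cheb_pderiv_Suc yields the
  equation multiplied by 1 - x^2; this factor is cancelled in the polynomial ring, so that the
  equation also holds at x = 1 and x = -1.\<close>
lemma cheb_ode: "(1 - x\<^sup>2) * T'' n x - x * T' n x + (real n)\<^sup>2 * T n x = 0"
proof -
  define L where "L = [:1, 0, -1:] * pderiv (pderiv (cheb n)) - [:0, 1:] * pderiv (cheb n)
    + smult ((real n)\<^sup>2) (cheb n)"
  have poly_L: "poly L y = (1 - y\<^sup>2) * T'' n y - y * T' n y + (real n)\<^sup>2 * T n y" for y
    by (simp add: L_def algebra_simps power2_eq_square)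
  have "poly ([:1, 0, -1:] * L) y = 0" for y
  proof -
    have D: "((\<lambda>x. (1 - x\<^sup>2) * T' n x) has_real_derivative
        - 2 * y * T' n y + (1 - y\<^sup>2) * T'' n y) (at y)"
      by (auto intro!: derivative_eq_intros simp: algebra_simps)
    have "((\<lambda>x. (1 - x\<^sup>2) * T' n x) has_real_derivative
        (real n * (T n y + y * T' n y - T' (Suc n) y))) (at y)"
      unfolding cheb_pderiv by (auto intro!: derivative_eq_intros simp: algebra_simps)
    from DERIV_unique[OF D this]
    have "(1 - y\<^sup>2) * T'' n y = 2 * y * T' n y + real n * (T n y + y * T' n y - T' (Suc n) y)"
      by simp
    with cheb_pderiv_Suc[of y n] cheb_pderiv[of y n]
    have "(1 - y\<^sup>2) * ((1 - y\<^sup>2) * T'' n y - y * T' n y + (real n)\<^sup>2 * T n y) = 0"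
      by (simp add: of_nat_Suc) algebra
    then show ?thesis unfolding poly_mult poly_L by (simp add: power2_eq_square)
  qed
  then have "[:1, 0, -1:] * L = 0"
    using poly_eq_poly_eq_iff[of "[:1, 0, -1:] * L" 0] by auto
  moreover have "[:1, 0, -1 :: real:] \<noteq> 0" by simp
  ultimately have "L = 0" by (metis mult_eq_0_iff)
  then show ?thesis using poly_L[of x] by simp
qed

lemma cheb_pell: "(1 - x\<^sup>2) * (T' n x)\<^sup>2 + (real n)\<^sup>2 * (T n x)\<^sup>2 = (real n)\<^sup>2"
proof -
  define E where "E x = (1 - x\<^sup>2) * (T' n x)\<^sup>2 + (real n)\<^sup>2 * (T n x)\<^sup>2" for x
  have "(E has_real_derivative 0) (at y)" for y
  proof -
    have "(E has_real_derivative
        2 * T' n y * ((1 - y\<^sup>2) * T'' n y - y * T' n y + (real n)\<^sup>2 * T n y)) (at y)"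
      unfolding E_def by (auto intro!: derivative_eq_intros simp: algebra_simps power2_eq_square)
    then show ?thesis by (simp only: cheb_ode mult_zero_right)
  qed
  then have "E x = E 1" by (intro DERIV_isconst_all) auto
  then show ?thesis by (simp add: E_def cheb_at_1)
qed

section \<open>Higher derivatives of the Chebyshev polynomials\<close>

lemma chebD_0 [simp]: "chebD n 0 x = T n x"
  by (simp add: chebD_def)

lemma chebD_Suc_0 [simp]: "chebD n (Suc 0) x = T' n x"
  by (simp add: chebD_def)

lemma chebD_has_real_derivative: "(chebD n j has_real_derivative chebD n (Suc j) x) (at x)"
  unfolding chebD_def[abs_def] by (simp add: poly_DERIV)

lemma continuous_on_chebD: "continuous_on S (chebD n j)"
  unfolding chebD_def[abs_def] by (intro continuous_intros)

lemma chebD_ode: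
  "(1 - x\<^sup>2) * chebD n (Suc (Suc j)) x
     = (2 * real j + 1) * x * chebD n (Suc j) x - ((real n)\<^sup>2 - (real j)\<^sup>2) * chebD n j x"
proof (induction j arbitrary: x)
  case 0
  show ?case using cheb_ode[of x n] by (simp add: chebD_def algebra_simps)
next
  case (Suc j)
  define F where "F x = (1 - x\<^sup>2) * chebD n (Suc (Suc j)) x - (2 * real j + 1) * x * chebD n (Suc j) x
    + ((real n)\<^sup>2 - (real j)\<^sup>2) * chebD n j x" for x
  have F0: "F = (\<lambda>_. 0)" using Suc.IH by (auto simp: F_def)
  have D: "(F has_real_derivative (1 - x\<^sup>2) * chebD n (Suc (Suc (Suc j))) x
      - (2 * real (Suc j) + 1) * x * chebD n (Suc (Suc j)) x
      + ((real n)\<^sup>2 - (real (Suc j))\<^sup>2) * chebD n (Suc j) x) (at x)"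
    unfolding F_def[abs_def]
    by (auto intro!: derivative_eq_intros chebD_has_real_derivative simp: algebra_simps power2_eq_square)
  have "(1 - x\<^sup>2) * chebD n (Suc (Suc (Suc j))) x - (2 * real (Suc j) + 1) * x * chebD n (Suc (Suc j)) x
      + ((real n)\<^sup>2 - (real (Suc j))\<^sup>2) * chebD n (Suc j) x = 0"
    using DERIV_unique[OF D] DERIV_const unfolding F0 by blast
  then show ?case by (simp add: algebra_simps)
qed

lemma dfact_odd_Suc: "dfact (2 * Suc m - 1) = (2 * m + 1) * dfact (2 * m - 1)"
  by (cases m) simp_all

lemma chebD_at_1: "chebD n k 1 = (\<Prod>j<k. (real n)\<^sup>2 - (real j)\<^sup>2) / real (dfact (2 * k - 1))"
proof (induction k)
  case (Suc k)
  have "chebD n (Suc k) 1 = ((real n)\<^sup>2 - (real k)\<^sup>2) / (2 * real k + 1) * chebD n k 1"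
    using chebD_ode[of 1 n k] by (simp add: field_simps)
  then show ?case unfolding Suc dfact_odd_Suc by (simp add: field_simps)
qed (simp add: cheb_at_1)

lemma dfact_pos: "dfact m > 0"
  by (induction m rule: dfact.induct) simp_all

lemma chebD_at_1_pos: "j \<le> n \<Longrightarrow> chebD n j 1 > 0"
  unfolding chebD_at_1
  by (intro divide_pos_pos prod_pos) (auto simp: dfact_pos power_strict_mono)

text \<open>Downward induction on j: T_n^(n) is a positive constant, and T_n^(j) increases on [1, oo)
  because its derivative T_n^(j+1) is positive there.\<close>
lemma chebD_pos:
  assumes "j \<le> n" and "1 \<le> x"
  shows "chebD n j x > 0"
proof -
  have "chebD n (n - d) x > 0" if "1 \<le> x" for d x
    using that
  proof (induction d arbitrary: x)
    case 0
    have "degree ((pderiv ^^ n) (cheb n)) = 0"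
      using degree_cheb[of n] by (simp add: degree_higher_pderiv)
    then have "chebD n n x = chebD n n 1"
      unfolding chebD_def by (metis degree_0_id poly_pCons poly_0 mult_zero_right add.right_neutral)
    then show ?case using chebD_at_1_pos[of n n] by simp
  next
    case (Suc d)
    show ?case
    proof (cases "d < n")
      case True
      have "Suc (n - Suc d) = n - d" using True by simp
      then have "(chebD n (n - Suc d) has_real_derivative chebD n (n - d) y) (at y)" for y
        using chebD_has_real_derivative by metis
      then have "chebD n (n - Suc d) 1 \<le> chebD n (n - Suc d) x"
        using Suc by (intro DERIV_nonneg_imp_nondecreasing[OF Suc.prems]) (auto intro: less_imp_le)
      then show ?thesis using chebD_at_1_pos[of "n - Suc d" n] by simp
    qed (use Suc in simp)
  qed
  from this[of x "n - j"] assms show ?thesis by simp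
qed

lemma chebD_minus: "chebD n j (- x) = (-1) ^ (n + j) * chebD n j x"
proof (induction j arbitrary: x)
  case (Suc j)
  have "((\<lambda>x. chebD n j (- x)) has_real_derivative - chebD n (Suc j) (- x)) (at x)"
    using DERIV_chain2[OF chebD_has_real_derivative DERIV_minus[OF DERIV_ident]] by simp
  moreover have "((\<lambda>x. (-1) ^ (n + j) * chebD n j x) has_real_derivative
      (-1) ^ (n + j) * chebD n (Suc j) x) (at x)"
    by (rule DERIV_cmult[OF chebD_has_real_derivative])
  ultimately show ?case unfolding Suc.IH by (auto dest: DERIV_unique)
qed (simp add: cheb_minus)

section \<open>Higher derivatives of S_n\<close>

text \<open>On (-1, 1), S_n^(j)(x) = R_j(x) (1 - x^2)^(1/2 - j) with R_j = chebS_num n j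
  (lemma higher_deriv_chebS).\<close>
fun chebS_num :: "nat \<Rightarrow> nat \<Rightarrow> real poly" where
  "chebS_num n 0 = smult (1 / real n) (pderiv (cheb n))"
| "chebS_num n (Suc j) =
    [:1, 0, -1:] * pderiv (chebS_num n j) + smult (2 * real j - 1) ([:0, 1:] * chebS_num n j)"

definition chebSD :: "nat \<Rightarrow> nat \<Rightarrow> real \<Rightarrow> real" where
  "chebSD n j x = poly (chebS_num n j) x * sqrt (1 - x\<^sup>2) / (1 - x\<^sup>2) ^ j"

lemma poly_chebS_num_Suc:
  "poly (chebS_num n (Suc j)) x
     = (1 - x\<^sup>2) * poly (pderiv (chebS_num n j)) x + (2 * real j - 1) * x * poly (chebS_num n j) x"
  by (simp add: algebra_simps power2_eq_square)

lemma chebS_num_1: "n \<ge> 1 \<Longrightarrow> chebS_num n 1 = smult (- real n) (cheb n)"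
proof (rule poly_eq_poly_eq_iff[THEN iffD1, OF ext])
  fix x assume "n \<ge> 1"
  have "poly (chebS_num n 1) x = ((1 - x\<^sup>2) * T'' n x - x * T' n x) / real n"
    by (simp add: pderiv_smult algebra_simps power2_eq_square diff_divide_distrib add_divide_distrib)
  also have "\<dots> = - real n * T n x"
    using cheb_ode[of x n] \<open>n \<ge> 1\<close> by (simp add: field_simps power2_eq_square)
  finally show "poly (chebS_num n 1) x = poly (smult (- real n) (cheb n)) x" by simp
qed

lemma pderiv_chebS_num:
  assumes "n \<ge> 1"
  shows "pderiv (chebS_num n (Suc j)) = smult (- ((real n)\<^sup>2 - (real j)\<^sup>2)) (chebS_num n j)"
proof (induction j)
  case 0
  show ?case
    using assms by (simp add: chebS_num_1[unfolded One_nat_def] pderiv_smult pderiv_minus power2_eq_square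
      del: chebS_num.simps(2))
next
  case (Suc j)
  let ?R = "chebS_num n" and ?\<mu> = "(real n)\<^sup>2 - (real j)\<^sup>2"
  have "poly (pderiv (?R (Suc (Suc j)))) x
      = poly (smult (- ((real n)\<^sup>2 - (real (Suc j))\<^sup>2)) (?R (Suc j))) x" for x
  proof -
    have "poly (pderiv (?R (Suc (Suc j)))) x
        = - 2 * x * poly (pderiv (?R (Suc j))) x + (1 - x\<^sup>2) * poly (pderiv (pderiv (?R (Suc j)))) x
          + (2 * real j + 1) * (poly (?R (Suc j)) x + x * poly (pderiv (?R (Suc j))) x)"
      by (simp only: chebS_num.simps(2)[of n "Suc j"])
        (simp add: pderiv_mult pderiv_add pderiv_smult pderiv_pCons pderiv_minus algebra_simps
          power2_eq_square del: chebS_num.simps)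
    also have "\<dots> = - ?\<mu> * (- 2 * x * poly (?R j) x + (1 - x\<^sup>2) * poly (pderiv (?R j)) x
          + (2 * real j + 1) * x * poly (?R j) x) + (2 * real j + 1) * poly (?R (Suc j)) x"
      unfolding Suc.IH by (simp add: pderiv_smult algebra_simps del: chebS_num.simps)
    also have "\<dots> = (2 * real j + 1 - ?\<mu>) * poly (?R (Suc j)) x"
      unfolding poly_chebS_num_Suc by (simp add: algebra_simps)
    finally show ?thesis by (simp add: algebra_simps power2_eq_square del: chebS_num.simps)
  qed
  then show ?case using poly_eq_poly_eq_iff by blast
qed

lemma one_minus_square_pos: "- 1 < x \<Longrightarrow> x < 1 \<Longrightarrow> 0 < 1 - (x :: real)\<^sup>2"
  by (simp add: abs_square_less_1 abs_less_iff)

lemma sqrt_one_minus_square_has_real_derivative: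
  assumes "- 1 < x" "x < 1"
  shows "((\<lambda>x. sqrt (1 - x\<^sup>2)) has_real_derivative - x / sqrt (1 - x\<^sup>2)) (at x)"
proof -
  have "0 < 1 - x\<^sup>2" using one_minus_square_pos[OF assms] .
  then show ?thesis
    by (auto intro!: derivative_eq_intros simp: field_simps)
qed

lemma weighted_poly_has_real_derivative:
  fixes p :: "real poly"
  assumes x: "- 1 < x" "x < 1"
  shows "((\<lambda>x. poly p x * sqrt (1 - x\<^sup>2) / (1 - x\<^sup>2) ^ j) has_real_derivative
    ((1 - x\<^sup>2) * poly (pderiv p) x + (2 * real j - 1) * x * poly p x) * sqrt (1 - x\<^sup>2)
      / (1 - x\<^sup>2) ^ Suc j) (at x)"
proof -
  define w where "w = 1 - x\<^sup>2"
  define s where "s = sqrt w"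
  have w: "0 < w" using one_minus_square_pos[OF x] by (simp add: w_def)
  have s: "s * s = w" "0 < s" using w by (simp_all add: s_def)
  have "((\<lambda>x. poly p x * sqrt (1 - x\<^sup>2) / (1 - x\<^sup>2) ^ j) has_real_derivative
      ((poly (pderiv p) x * s + poly p x * (- x / s)) * w ^ j
        - poly p x * s * (real j * w ^ (j - 1) * (- 2 * x))) / (w ^ j * w ^ j)) (at x)"
    using w unfolding s_def w_def
    by (auto intro!: derivative_eq_intros poly_DERIV sqrt_one_minus_square_has_real_derivative[OF x]
        simp: power2_eq_square inverse_eq_divide)
  moreover have "((poly (pderiv p) x * s + poly p x * (- x / s)) * w ^ j
      - poly p x * s * (real j * w ^ (j - 1) * (- 2 * x))) / (w ^ j * w ^ j)
    = (w * poly (pderiv p) x + (2 * real j - 1) * x * poly p x) * s / w ^ Suc j"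
  proof (cases j)
    case 0 then show ?thesis unfolding s(1)[symmetric] using s(2) by (simp add: field_simps)
  next
    case (Suc i)
    then show ?thesis unfolding s(1)[symmetric] using s(2) by (simp add: field_simps power_Suc)
  qed
  ultimately show ?thesis by (simp add: s_def w_def)
qed

lemma chebSD_has_real_derivative:
  "- 1 < x \<Longrightarrow> x < 1 \<Longrightarrow> (chebSD n j has_real_derivative chebSD n (Suc j) x) (at x)"
  unfolding chebSD_def[abs_def] poly_chebS_num_Suc by (rule weighted_poly_has_real_derivative)

lemma higher_deriv_chebS: "- 1 < x \<Longrightarrow> x < 1 \<Longrightarrow> (deriv ^^ j) (chebS n) x = chebSD n j x"
proof (induction j arbitrary: x)
  case 0
  then show ?case by (simp add: chebS_def chebSD_def)
next
  case (Suc j)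
  have "((deriv ^^ j) (chebS n) has_real_derivative chebSD n (Suc j) x) (at x)"
    by (rule has_field_derivative_transform_within_open[where S = "{-1<..<1}",
          OF chebSD_has_real_derivative]) (use Suc in auto)
  then show ?case by (simp add: DERIV_imp_deriv)
qed

lemma chebSD_1: "n \<ge> 1 \<Longrightarrow> chebSD n 1 x = - real n * T n x * sqrt (1 - x\<^sup>2) / (1 - x\<^sup>2)"
  unfolding chebSD_def by (simp only: chebS_num_1) simp

lemma chebSD_ode:
  assumes x: "- 1 < x" "x < 1" and n: "n \<ge> 1"
  shows "(1 - x\<^sup>2) * chebSD n (Suc (Suc j)) x
    = (2 * real j + 1) * x * chebSD n (Suc j) x - ((real n)\<^sup>2 - (real j)\<^sup>2) * chebSD n j x"
proof -
  have R: "poly (chebS_num n (Suc (Suc j))) x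
      = - ((real n)\<^sup>2 - (real j)\<^sup>2) * (1 - x\<^sup>2) * poly (chebS_num n j) x
        + (2 * real j + 1) * x * poly (chebS_num n (Suc j)) x"
    unfolding poly_chebS_num_Suc[of n "Suc j"] pderiv_chebS_num[OF n] by (simp add: algebra_simps)
  define w where "w = 1 - x\<^sup>2"
  have "w \<noteq> 0" using one_minus_square_pos[OF x] by (simp add: w_def)
  then show ?thesis
    unfolding chebSD_def R w_def[symmetric] by (simp add: field_simps power_Suc)
qed

section \<open>The coefficients of the envelope\<close>

definition env_coeff :: "nat \<Rightarrow> nat \<Rightarrow> nat \<Rightarrow> real" where
  "env_coeff n M k = ccoef M k * (\<Prod>i = M + 1..k - 1. (real n)\<^sup>2 - (real i)\<^sup>2)"

lemma ccoef_eq: "ccoef m k = real ((k - 1 + m) choose (2 * m)) * (real (dfact (2 * m - 1)))\<^sup>2"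
  by (simp add: ccoef_def)

lemma env_coeff_eq_0: "1 \<le> k \<Longrightarrow> k \<le> M \<Longrightarrow> env_coeff n M k = 0"
  by (simp add: env_coeff_def ccoef_eq binomial_eq_0)

lemma env_coeff_0_1: "env_coeff n 0 1 = 1"
  by (simp add: env_coeff_def ccoef_def)

lemma env_coeff_nonneg: "k \<le> n \<Longrightarrow> env_coeff n M k \<ge> 0"
  unfolding env_coeff_def ccoef_eq
  by (intro mult_nonneg_nonneg prod_nonneg) (auto simp: power_mono)

lemma env_coeff_0_pos: "1 \<le> k \<Longrightarrow> k \<le> n \<Longrightarrow> env_coeff n 0 k > 0"
  unfolding env_coeff_def ccoef_def by (auto intro!: prod_pos simp: power_strict_mono)

lemma prod_atLeastAtMost_pred_Suc:
  "M < k \<Longrightarrow> (\<Prod>i = M + 1..Suc k - 1. f i) = (\<Prod>i = M + 1..k - 1. f i) * (f k :: 'a :: comm_monoid_mult)"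
  by (cases k) (auto simp: prod.cl_ivl_Suc mult.commute)

lemma ccoef_Suc: "M < k \<Longrightarrow> ccoef M (Suc k) * (real k - real M) = ccoef M k * real (k + M)"
proof (cases "M = 0")
  case False
  assume "M < k"
  have "(k + M - 2 * M) * ((k + M) choose (2 * M)) = (k + M) * ((k + M - 1) choose (2 * M))"
    by (rule binomial_absorb_comp)
  moreover have "k + M - 2 * M = k - M" by simp
  ultimately have "real ((k + M) choose (2 * M)) * (real k - real M)
      = real ((k + M - 1) choose (2 * M)) * real (k + M)"
    using \<open>M < k\<close> by (metis of_nat_mult of_nat_diff less_imp_le mult.commute)
  moreover have "Suc k - 1 + M = k + M" "k - 1 + M = k + M - 1" using \<open>M < k\<close> by auto
  ultimately show ?thesis using False by (simp add: ccoef_def)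
qed (simp add: ccoef_def)

lemma binomial_Suc_Suc_mult:
  "((a + b + 2) choose (a + 2)) * (a + 2) * (a + 1) = (a + b + 2) * (b + 1) * ((a + b + 1) choose a)"
proof -
  have "(a + 2) * ((a + b + 2) choose (a + 2)) = (a + b + 2) * ((a + b + 1) choose (a + 1))"
    using binomial_absorption[of "a + 1" "a + b + 2"] by (simp add: algebra_simps)
  moreover have "(a + 1) * ((a + b + 1) choose (a + 1)) = (b + 1) * ((a + b + 1) choose a)"
    using Suc_times_binomial_add[of a b] by (simp add: algebra_simps)
  ultimately show ?thesis by (metis mult.assoc mult.commute)
qed

lemma ccoef_pred:
  assumes "1 \<le> M" "M < k"
  shows "ccoef (M - 1) k * real (k + M - 1) * real (2 * M - 1) * (real k - real M)
    = ccoef M k * (2 * real M)"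
proof -
  obtain p where M: "M = Suc p" using assms by (cases M) auto
  obtain r where "k = Suc (M + r)" using less_imp_Suc_add[OF assms(2)] by blast
  then have k: "k = p + r + 2" using M by simp
  define d where "d = real (dfact (2 * p - 1))"
  have "k - 1 + (M - 1) = 2 * p + r + 1" "2 * (M - 1) = 2 * p" using M k by auto
  then have c0: "ccoef (M - 1) k = real ((2 * p + r + 1) choose (2 * p)) * d\<^sup>2"
    unfolding ccoef_eq d_def by (simp only:)
  have "k - 1 + Suc p = 2 * p + r + 2" "2 * Suc p = 2 * p + 2" using k by auto
  then have c1: "ccoef M k = real ((2 * p + r + 2) choose (2 * p + 2)) * (real (2 * p + 1))\<^sup>2 * d\<^sup>2"
    unfolding ccoef_eq d_def M dfact_odd_Suc of_nat_mult power_mult_distrib by (simp only: mult_ac)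
  have B: "real ((2 * p + r + 2) choose (2 * p + 2)) * real (2 * p + 2) * real (2 * p + 1)
      = real (2 * p + r + 2) * real (r + 1) * real ((2 * p + r + 1) choose (2 * p))"
    using binomial_Suc_Suc_mult[of "2 * p" r] by (metis of_nat_mult)
  have e: "real k - real M = real (r + 1)" "real (k + M - 1) = real (2 * p + r + 2)"
    "real (2 * M - 1) = real (2 * p + 1)" "2 * real M = real (2 * p + 2)"
    using k M by auto
  show ?thesis
    unfolding c0 c1 e using B by (simp only: power2_eq_square mult_ac)
qed

lemma ccoef_Suc_recurrence:
  assumes "1 \<le> M" "M < k"
  shows "ccoef M (Suc k) * ((real n)\<^sup>2 - (real k)\<^sup>2)
    = ccoef (M - 1) k * ((real n)\<^sup>2 - (real M)\<^sup>2) * real (k + M - 1) * real (2 * M - 1)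
      + ccoef M k * ((real n)\<^sup>2 - (real k + real M)\<^sup>2 - (real M)\<^sup>2)"
proof -
  have cancel: "c1 * (N - K\<^sup>2) = c0 * (N - L\<^sup>2) * e1 * e2 + c * (N - (K + L)\<^sup>2 - L\<^sup>2)"
    if "K \<noteq> L" "c1 * (K - L) = c * (K + L)" "c0 * e1 * e2 * (K - L) = c * (2 * L)"
    for K L N c c0 c1 e1 e2 :: real
  proof -
    have "(K - L) * (c1 * (N - K\<^sup>2) - (c0 * (N - L\<^sup>2) * e1 * e2 + c * (N - (K + L)\<^sup>2 - L\<^sup>2))) = 0"
      using that(2,3) by algebra
    then show ?thesis using that(1) by simp
  qed
  show ?thesis
    by (rule cancel) (use assms ccoef_Suc[OF assms(2)] ccoef_pred[OF assms] in simp_all)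
qed

lemma env_coeff_Suc_mult:
  assumes "1 \<le> k"
  shows "env_coeff n M (Suc k) * (real k - real M)
    = ((real n)\<^sup>2 - (real k)\<^sup>2) * real (k + M) * env_coeff n M k"
proof (cases "M < k")
  case True
  define P where "P = (\<Prod>i = M + 1..k - 1. (real n)\<^sup>2 - (real i)\<^sup>2)"
  have "env_coeff n M (Suc k) * (real k - real M)
      = (ccoef M (Suc k) * (real k - real M)) * P * ((real n)\<^sup>2 - (real k)\<^sup>2)"
    unfolding env_coeff_def P_def prod_atLeastAtMost_pred_Suc[OF True] by (simp add: algebra_simps)
  also have "\<dots> = ((real n)\<^sup>2 - (real k)\<^sup>2) * real (k + M) * env_coeff n M k"
    unfolding ccoef_Suc[OF True] env_coeff_def P_def by (simp add: algebra_simps)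
  finally show ?thesis .
next
  case False
  then show ?thesis using env_coeff_eq_0[OF assms] env_coeff_eq_0[of "Suc k" M n] by (cases "M = k") auto
qed

lemma env_coeff_Suc:
  assumes k: "1 \<le> k"
  shows "env_coeff n M (Suc k)
    = (if M = 0 then 0 else env_coeff n (M - 1) k * real (k + M - 1) * real (2 * M - 1))
      + env_coeff n M k * ((real n)\<^sup>2 - (real (k + M))\<^sup>2 - (real M)\<^sup>2)"
proof -
  let ?q = "\<lambda>i. (real n)\<^sup>2 - (real i)\<^sup>2"
  consider "M = 0" | "1 \<le> M" "M < k" | "M = k" | "k < M" by linarith
  then show ?thesis
  proof cases
    case 1
    then show ?thesis
      using prod_atLeastAtMost_pred_Suc[of 0 k ?q] k by (simp add: ccoef_def env_coeff_def)
  next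
    case 2
    define P where "P = (\<Prod>i = M + 1..k - 1. ?q i)"
    have a1: "env_coeff n M (Suc k) = ccoef M (Suc k) * ?q k * P"
      unfolding env_coeff_def P_def prod_atLeastAtMost_pred_Suc[OF \<open>M < k\<close>] by simp
    have "(\<Prod>i = M - 1 + 1..k - 1. ?q i) = ?q M * P"
      unfolding P_def using prod.atLeast_Suc_atMost[of M "k - 1" ?q] 2 by simp
    then have a2: "env_coeff n (M - 1) k = ccoef (M - 1) k * ?q M * P"
      unfolding env_coeff_def by simp
    have a3: "env_coeff n M k = ccoef M k * P" unfolding env_coeff_def P_def by simp
    note main = ccoef_Suc_recurrence[OF 2, of n]
    have "env_coeff n M (Suc k) = (ccoef M (Suc k) * ?q k) * P" unfolding a1 by simp
    also have "\<dots> = env_coeff n (M - 1) k * real (k + M - 1) * real (2 * M - 1)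
        + env_coeff n M k * ((real n)\<^sup>2 - (real (k + M))\<^sup>2 - (real M)\<^sup>2)"
      unfolding main a2 a3 of_nat_add by (simp only: distrib_left distrib_right mult_ac)
    finally show ?thesis using 2 by simp
  next
    case 3
    then obtain p where p: "k = Suc p" using k by (cases k) auto
    have "env_coeff n k (Suc k) = (real (dfact (2 * k - 1)))\<^sup>2"
      unfolding env_coeff_def ccoef_def using k by (simp add: mult_2)
    moreover have "env_coeff n (k - 1) k = (real (dfact (2 * p - 1)))\<^sup>2"
      unfolding env_coeff_def ccoef_eq using p by (simp add: mult_2)
    moreover have "dfact (2 * k - 1) = (2 * p + 1) * dfact (2 * p - 1)"
      using dfact_odd_Suc[of p] p by simp
    moreover have "k + k - 1 = 2 * p + 1" "2 * k - 1 = 2 * p + 1" using p by auto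
    ultimately show ?thesis using 3 p env_coeff_eq_0[OF k order.refl]
      by (simp add: power2_eq_square algebra_simps)
  next
    case 4
    then show ?thesis using env_coeff_eq_0[OF k] env_coeff_eq_0[of "Suc k" M n] by simp
  qed
qed

text \<open>With y = 1 / (1 - x^2), we have D_(n,k)(x)^2 = n^2 envelope_poly n k y and
  T_n^(k) T_n^(k+1) + S_n^(k) S_n^(k+1) = x n^2 cross_poly n k y (see envelope_closed_form).
  Since d/dx (x y^p) = (1 - 2p) y^p + 2p y^(p+1), the function cross_poly_deriv n k y is the
  x-derivative of x cross_poly n k y.\<close>
definition envelope_poly :: "nat \<Rightarrow> nat \<Rightarrow> real \<Rightarrow> real" where
  "envelope_poly n k y = (\<Sum>M<k. env_coeff n M k * y ^ (k + M))"

definition cross_poly :: "nat \<Rightarrow> nat \<Rightarrow> real \<Rightarrow> real" where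
  "cross_poly n k y = (\<Sum>M<k. env_coeff n M k * real (k + M) * y ^ (k + M + 1))"

definition cross_poly_deriv :: "nat \<Rightarrow> nat \<Rightarrow> real \<Rightarrow> real" where
  "cross_poly_deriv n k y = (\<Sum>M<k. env_coeff n M k * real (k + M)
     * ((1 - 2 * real (k + M + 1)) * y ^ (k + M + 1) + 2 * real (k + M + 1) * y ^ (k + M + 2)))"

lemma sum_env_coeff_Suc:
  "1 \<le> k \<Longrightarrow> (\<Sum>M<k. env_coeff n M k * f M) = (\<Sum>M<Suc k. env_coeff n M k * f M)"
  using env_coeff_eq_0[of k k n] by simp

lemma cross_poly_Suc:
  assumes k: "1 \<le> k"
  shows "((2 * real k + 1) * envelope_poly n (Suc k) y - ((real n)\<^sup>2 - (real k)\<^sup>2) * cross_poly n k y) * y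
    = cross_poly n (Suc k) y"
proof -
  define \<mu> where "\<mu> = (real n)\<^sup>2 - (real k)\<^sup>2"
  have "cross_poly n k y = (\<Sum>M<Suc k. env_coeff n M k * (real (k + M) * y ^ (k + M + 1)))"
    unfolding cross_poly_def using sum_env_coeff_Suc[OF k, of n "\<lambda>M. real (k + M) * y ^ (k + M + 1)"]
    by (simp add: mult.assoc)
  then have "((2 * real k + 1) * envelope_poly n (Suc k) y - \<mu> * cross_poly n k y) * y
     = (\<Sum>M<Suc k. ((2 * real k + 1) * env_coeff n M (Suc k) - \<mu> * real (k + M) * env_coeff n M k)
         * y ^ (Suc k + M + 1))"
    unfolding envelope_poly_def
    by (simp add: sum_distrib_left sum_distrib_right sum_subtractf sum.distrib algebra_simps)
  also have "\<dots> = (\<Sum>M<Suc k. env_coeff n M (Suc k) * real (Suc k + M) * y ^ (Suc k + M + 1))"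
  proof (rule sum.cong[OF refl])
    fix M
    have "(2 * real k + 1) * env_coeff n M (Suc k) - \<mu> * real (k + M) * env_coeff n M k
        = env_coeff n M (Suc k) * real (Suc k + M)"
      using env_coeff_Suc_mult[OF k, of n M] unfolding \<mu>_def by (simp add: algebra_simps)
    then show "((2 * real k + 1) * env_coeff n M (Suc k) - \<mu> * real (k + M) * env_coeff n M k)
        * y ^ (Suc k + M + 1) = env_coeff n M (Suc k) * real (Suc k + M) * y ^ (Suc k + M + 1)"
      by simp
  qed
  also have "\<dots> = cross_poly n (Suc k) y" unfolding cross_poly_def by simp
  finally show ?thesis unfolding \<mu>_def .
qed

lemma envelope_poly_Suc:
  assumes k: "1 \<le> k"
  shows "cross_poly_deriv n k y - ((2 * real k + 1) * (y - 1) * cross_poly n k y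
      - ((real n)\<^sup>2 - (real k)\<^sup>2) * y * envelope_poly n k y)
    = envelope_poly n (Suc k) y"
proof -
  define a where "a M = env_coeff n M k" for M
  define \<mu> where "\<mu> = (real n)\<^sup>2 - (real k)\<^sup>2"
  define b where "b M = a M * (\<mu> - 2 * real M * real (k + M))" for M
  define c where "c M = (if M = 0 then 0 else a (M - 1) * real (k + M - 1) * real (2 * M - 1))" for M
  have "cross_poly_deriv n k y
      - ((2 * real k + 1) * (y - 1) * cross_poly n k y - \<mu> * y * envelope_poly n k y)
     = (\<Sum>M<k. a M * real (k + M) * ((1 - 2 * real (k + M + 1)) * y ^ (k + M + 1)
          + 2 * real (k + M + 1) * y ^ (k + M + 2))
        - (2 * real k + 1)
          * (a M * real (k + M) * y ^ (k + M + 2) - a M * real (k + M) * y ^ (k + M + 1))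
        + \<mu> * (a M * y ^ (k + M + 1)))"
    unfolding cross_poly_deriv_def cross_poly_def envelope_poly_def a_def
    by (simp add: sum_distrib_left sum_subtractf sum.distrib algebra_simps)
  also have "\<dots> = (\<Sum>M<k. b M * y ^ (Suc k + M)) + (\<Sum>M<k. c (Suc M) * y ^ (Suc k + Suc M))"
    unfolding sum.distrib[symmetric] b_def c_def by (rule sum.cong[OF refl]) (simp add: algebra_simps)
  also have "\<dots> = (\<Sum>M<Suc k. b M * y ^ (Suc k + M)) + (\<Sum>M<Suc k. c M * y ^ (Suc k + M))"
  proof -
    have "b k = 0" using env_coeff_eq_0[of k k n] k by (simp add: a_def b_def)
    moreover have "(\<Sum>M<Suc k. c M * y ^ (Suc k + M)) = (\<Sum>M<k. c (Suc M) * y ^ (Suc k + Suc M))"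
      unfolding sum.lessThan_Suc_shift by (simp add: c_def)
    ultimately show ?thesis by simp
  qed
  also have "\<dots> = envelope_poly n (Suc k) y"
    unfolding envelope_poly_def sum.distrib[symmetric]
  proof (rule sum.cong[OF refl])
    fix M
    have "(real n)\<^sup>2 - (real (k + M))\<^sup>2 - (real M)\<^sup>2 = \<mu> - 2 * real M * real (k + M)"
      unfolding \<mu>_def by (simp add: power2_eq_square algebra_simps)
    then have "env_coeff n M (Suc k) = b M + c M"
      unfolding env_coeff_Suc[OF k, of n M] a_def b_def c_def by simp
    then show "b M * y ^ (Suc k + M) + c M * y ^ (Suc k + M) = env_coeff n M (Suc k) * y ^ (Suc k + M)"
      by (simp add: distrib_right)
  qed
  finally show ?thesis unfolding \<mu>_def .
qed

section \<open>A closed form of the envelope\<close>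

definition envelope :: "nat \<Rightarrow> nat \<Rightarrow> real \<Rightarrow> real" where
  "envelope n j x = (chebD n j x)\<^sup>2 + (chebSD n j x)\<^sup>2"

definition cross :: "nat \<Rightarrow> nat \<Rightarrow> real \<Rightarrow> real" where
  "cross n j x = chebD n j x * chebD n (Suc j) x + chebSD n j x * chebSD n (Suc j) x"

definition csc2 :: "real \<Rightarrow> real" where
  "csc2 x = 1 / (1 - x\<^sup>2)"

lemma cross_Suc:
  assumes x: "- 1 < x" "x < 1" and n: "n \<ge> 1"
  shows "(1 - x\<^sup>2) * cross n (Suc j) x
    = (2 * real j + 1) * x * envelope n (Suc j) x - ((real n)\<^sup>2 - (real j)\<^sup>2) * cross n j x"
proof -
  have "(1 - x\<^sup>2) * cross n (Suc j) x = chebD n (Suc j) x * ((1 - x\<^sup>2) * chebD n (Suc (Suc j)) x)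
      + chebSD n (Suc j) x * ((1 - x\<^sup>2) * chebSD n (Suc (Suc j)) x)"
    unfolding cross_def by (simp add: algebra_simps)
  also have "\<dots> = (2 * real j + 1) * x * envelope n (Suc j) x - ((real n)\<^sup>2 - (real j)\<^sup>2) * cross n j x"
    unfolding chebD_ode chebSD_ode[OF x n] envelope_def cross_def
    by (simp add: algebra_simps power2_eq_square)
  finally show ?thesis .
qed

lemma cross_has_real_derivative:
  assumes x: "- 1 < x" "x < 1" and n: "n \<ge> 1"
  shows "(cross n j has_real_derivative envelope n (Suc j) x
    + ((2 * real j + 1) * x * cross n j x - ((real n)\<^sup>2 - (real j)\<^sup>2) * envelope n j x) / (1 - x\<^sup>2)) (at x)"
proof -
  have t: "1 - x\<^sup>2 \<noteq> 0" using one_minus_square_pos[OF x] by simp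
  have "(cross n j has_real_derivative envelope n (Suc j) x
      + (chebD n j x * ((1 - x\<^sup>2) * chebD n (Suc (Suc j)) x)
        + chebSD n j x * ((1 - x\<^sup>2) * chebSD n (Suc (Suc j)) x)) / (1 - x\<^sup>2)) (at x)"
    unfolding cross_def[abs_def] envelope_def using t
    by (auto intro!: derivative_eq_intros chebD_has_real_derivative chebSD_has_real_derivative x
        simp: field_simps power2_eq_square)
  then show ?thesis
    unfolding chebD_ode chebSD_ode[OF x n] envelope_def cross_def
    by (simp add: algebra_simps power2_eq_square)
qed

lemma envelope_1:
  assumes x: "- 1 < x" "x < 1" and n: "n \<ge> 1"
  shows "envelope n 1 x = (real n)\<^sup>2 * csc2 x"
proof -
  define w where "w = 1 - x\<^sup>2"
  have w: "0 < w" using one_minus_square_pos[OF x] by (simp add: w_def)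
  have "envelope n 1 x = (T' n x)\<^sup>2 + (real n)\<^sup>2 * (T n x)\<^sup>2 * (sqrt w)\<^sup>2 / w\<^sup>2"
    unfolding envelope_def chebSD_1[OF n] w_def by (simp add: power_mult_distrib power_divide)
  also have "\<dots> = (w * (T' n x)\<^sup>2 + (real n)\<^sup>2 * (T n x)\<^sup>2) / w"
    using w by (simp add: field_simps power2_eq_square)
  also have "\<dots> = (real n)\<^sup>2 * csc2 x" unfolding w_def cheb_pell csc2_def by simp
  finally show ?thesis .
qed

lemma cross_0:
  assumes x: "- 1 < x" "x < 1" and n: "n \<ge> 1"
  shows "cross n 0 x = 0"
proof -
  define w where "w = 1 - x\<^sup>2"
  have w: "0 < w" using one_minus_square_pos[OF x] by (simp add: w_def)
  have "cross n 0 x = T n x * T' n x - T n x * T' n x * (sqrt w * sqrt w) / w"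
    unfolding cross_def chebSD_1[OF n, unfolded One_nat_def] w_def
    using n by (simp add: chebSD_def field_simps)
  then show ?thesis using w by simp
qed

lemma square_mult_csc2: "- 1 < x \<Longrightarrow> x < 1 \<Longrightarrow> x\<^sup>2 * csc2 x = csc2 x - 1"
  using one_minus_square_pos[of x] by (simp add: csc2_def field_simps)

lemma csc2_has_real_derivative:
  assumes "- 1 < x" "x < 1"
  shows "(csc2 has_real_derivative 2 * x * (csc2 x)\<^sup>2) (at x)"
  unfolding csc2_def[abs_def] using one_minus_square_pos[OF assms]
  by (auto intro!: derivative_eq_intros simp: power2_eq_square field_simps)

lemma x_mult_csc2_power_has_real_derivative:
  assumes x: "- 1 < x" "x < 1" and "p \<ge> 1"
  shows "((\<lambda>x. x * csc2 x ^ p) has_real_derivative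
    (1 - 2 * real p) * csc2 x ^ p + 2 * real p * csc2 x ^ (p + 1)) (at x)"
proof -
  have D: "((\<lambda>x. x * csc2 x ^ p) has_real_derivative
      csc2 x ^ p + 2 * real p * (x\<^sup>2 * csc2 x ^ (p + 1))) (at x)"
    using \<open>p \<ge> 1\<close>
    by (auto intro!: derivative_eq_intros csc2_has_real_derivative[OF x]
        simp: power2_eq_square algebra_simps power_Suc[symmetric] simp del: power_Suc)
  have "x\<^sup>2 * csc2 x ^ (p + 1) = (csc2 x - 1) * csc2 x ^ p"
    using square_mult_csc2[OF x] by (simp add: mult.assoc[symmetric])
  then show ?thesis using D by (simp only:) (simp add: algebra_simps)
qed

lemma x_mult_cross_poly_has_real_derivative:
  assumes x: "- 1 < x" "x < 1"
  shows "((\<lambda>x. x * (real n)\<^sup>2 * cross_poly n k (csc2 x)) has_real_derivative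
    (real n)\<^sup>2 * cross_poly_deriv n k (csc2 x)) (at x)"
proof -
  have "(\<lambda>x. x * (real n)\<^sup>2 * cross_poly n k (csc2 x))
      = (\<lambda>x. (real n)\<^sup>2 * (\<Sum>M<k. env_coeff n M k * real (k + M) * (x * csc2 x ^ (k + M + 1))))"
    by (auto simp: cross_poly_def sum_distrib_left algebra_simps)
  moreover have "((\<lambda>x. (real n)\<^sup>2 * (\<Sum>M<k. env_coeff n M k * real (k + M) * (x * csc2 x ^ (k + M + 1))))
      has_real_derivative (real n)\<^sup>2 * (\<Sum>M<k. env_coeff n M k * real (k + M)
        * ((1 - 2 * real (k + M + 1)) * csc2 x ^ (k + M + 1)
          + 2 * real (k + M + 1) * csc2 x ^ (k + M + 1 + 1))))
      (at x)"
    by (intro DERIV_cmult DERIV_sum x_mult_csc2_power_has_real_derivative x) simp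
  ultimately show ?thesis unfolding cross_poly_deriv_def by (simp add: add.assoc)
qed

definition envelope_closed_form :: "nat \<Rightarrow> nat \<Rightarrow> real \<Rightarrow> bool" where
  "envelope_closed_form n k x \<longleftrightarrow> envelope n k x = (real n)\<^sup>2 * envelope_poly n k (csc2 x)
     \<and> cross n k x = x * (real n)\<^sup>2 * cross_poly n k (csc2 x)"

lemma envelope_closed_form_1:
  assumes x: "- 1 < x" "x < 1" and n: "n \<ge> 1"
  shows "envelope_closed_form n 1 x"
proof -
  have "(1 - x\<^sup>2) * cross n 1 x = x * envelope n 1 x"
    using cross_Suc[OF x n, of 0] cross_0[OF x n] by simp
  then have "cross n 1 x = x * envelope n 1 x * csc2 x"
    using one_minus_square_pos[OF x] by (simp add: csc2_def field_simps)
  then show ?thesis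
    unfolding envelope_closed_form_def envelope_1[OF x n]
    by (simp add: envelope_poly_def cross_poly_def env_coeff_0_1[unfolded One_nat_def] power2_eq_square)
qed

text \<open>The closed form of the cross term is differentiated: by cross_has_real_derivative this
  gives the envelope of order k + 1, and cross_Suc then gives the next cross term.\<close>
lemma envelope_closed_form_Suc:
  assumes n: "n \<ge> 1" and k: "1 \<le> k"
    and IH: "\<And>x. - 1 < x \<Longrightarrow> x < 1 \<Longrightarrow> envelope_closed_form n k x"
    and x: "- 1 < x" "x < 1"
  shows "envelope_closed_form n (Suc k) x"
proof -
  define \<mu> where "\<mu> = (real n)\<^sup>2 - (real k)\<^sup>2"
  have IHx: "envelope n k x = (real n)\<^sup>2 * envelope_poly n k (csc2 x)"
    "cross n k x = x * (real n)\<^sup>2 * cross_poly n k (csc2 x)"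
    using IH[OF x] by (auto simp: envelope_closed_form_def)
  have "(cross n k has_real_derivative (real n)\<^sup>2 * cross_poly_deriv n k (csc2 x)) (at x)"
    by (rule has_field_derivative_transform_within_open[OF x_mult_cross_poly_has_real_derivative[OF x],
          where S = "{-1<..<1}"]) (use x IH in \<open>auto simp: envelope_closed_form_def\<close>)
  from DERIV_unique[OF cross_has_real_derivative[OF x n, of k] this]
  have "envelope n (Suc k) x
      = (real n)\<^sup>2 * cross_poly_deriv n k (csc2 x)
        - ((2 * real k + 1) * x * cross n k x - \<mu> * envelope n k x) * csc2 x"
    unfolding \<mu>_def by (simp add: csc2_def divide_inverse)
  also have "\<dots> = (real n)\<^sup>2 * (cross_poly_deriv n k (csc2 x) - ((2 * real k + 1) * (x\<^sup>2 * csc2 x)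
      * cross_poly n k (csc2 x) - \<mu> * csc2 x * envelope_poly n k (csc2 x)))"
    unfolding IHx by (simp add: algebra_simps power2_eq_square)
  also have "\<dots> = (real n)\<^sup>2 * envelope_poly n (Suc k) (csc2 x)"
    unfolding square_mult_csc2[OF x] \<mu>_def envelope_poly_Suc[OF k] ..
  finally have N: "envelope n (Suc k) x = (real n)\<^sup>2 * envelope_poly n (Suc k) (csc2 x)" .
  have "(1 - x\<^sup>2) * cross n (Suc k) x = (2 * real k + 1) * x * envelope n (Suc k) x - \<mu> * cross n k x"
    using cross_Suc[OF x n, of k] unfolding \<mu>_def .
  then have "cross n (Suc k) x
      = ((2 * real k + 1) * x * envelope n (Suc k) x - \<mu> * cross n k x) * csc2 x"
    using one_minus_square_pos[OF x] by (simp add: csc2_def field_simps)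
  also have "\<dots> = x * (real n)\<^sup>2 * (((2 * real k + 1) * envelope_poly n (Suc k) (csc2 x)
      - \<mu> * cross_poly n k (csc2 x)) * csc2 x)"
    unfolding N IHx by (simp add: algebra_simps)
  also have "\<dots> = x * (real n)\<^sup>2 * cross_poly n (Suc k) (csc2 x)"
    unfolding \<mu>_def cross_poly_Suc[OF k] ..
  finally show ?thesis using N unfolding envelope_closed_form_def by simp
qed

lemma envelope_eq_envelope_poly:
  assumes "n \<ge> 1" "1 \<le> k" "- 1 < x" "x < 1"
  shows "envelope n k x = (real n)\<^sup>2 * envelope_poly n k (csc2 x)"
proof -
  have "\<forall>x. - 1 < x \<and> x < 1 \<longrightarrow> envelope_closed_form n k x"
    using \<open>1 \<le> k\<close>
  proof (induction k rule: nat_induct_at_least)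
    case base
    then show ?case using envelope_closed_form_1 \<open>n \<ge> 1\<close> by blast
  next
    case (Suc k)
    then show ?case using envelope_closed_form_Suc \<open>n \<ge> 1\<close> by blast
  qed
  then show ?thesis using assms by (simp add: envelope_closed_form_def)
qed

section \<open>Evaluation at x_k\<close>

lemma xk_bounds:
  assumes "1 \<le> k" "k < n"
  shows "0 < xk n k" "xk n k < 1" "(xk n k)\<^sup>2 = 1 - (real k)\<^sup>2 / (real n)\<^sup>2"
proof -
  have "0 < (real k)\<^sup>2 / (real n)\<^sup>2" "(real k)\<^sup>2 / (real n)\<^sup>2 < 1"
    using assms by (simp_all add: power_strict_mono)
  then show "0 < xk n k" "xk n k < 1" "(xk n k)\<^sup>2 = 1 - (real k)\<^sup>2 / (real n)\<^sup>2"
    unfolding xk_def by simp_all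
qed

lemma csc2_xk: "1 \<le> k \<Longrightarrow> k < n \<Longrightarrow> csc2 (xk n k) = (real n)\<^sup>2 / (real k)\<^sup>2"
  using xk_bounds(3) by (simp add: csc2_def)

lemma delta_sq_eq_envelope:
  assumes "1 \<le> k" "k < n"
  shows "(delta n k)\<^sup>2 = envelope n k (xk n k) / (chebD n k 1)\<^sup>2"
proof -
  have "- 1 < xk n k" "xk n k < 1" using xk_bounds[OF assms] by auto
  then have "(chebDD n k (xk n k))\<^sup>2 = envelope n k (xk n k)"
    unfolding chebDD_def envelope_def using higher_deriv_chebS[of "xk n k" k n] by simp
  then show ?thesis unfolding delta_def by (simp add: power_divide)
qed

lemma prod_square_diff_pos:
  "1 \<le> k \<Longrightarrow> k \<le> n \<Longrightarrow> (\<Prod>j = a..k - 1. (real n)\<^sup>2 - (real j)\<^sup>2) > 0"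
  by (intro prod_pos) (auto intro!: power_strict_mono)

lemma prod_lessThan_square_diff:
  "1 \<le> k \<Longrightarrow> (\<Prod>j<k. (real n)\<^sup>2 - (real j)\<^sup>2) = (real n)\<^sup>2 * (\<Prod>j = 1..k - 1. (real n)\<^sup>2 - (real j)\<^sup>2)"
proof (cases k)
  case (Suc m)
  then show ?thesis
    unfolding Suc prod.lessThan_Suc_shift using prod.atLeast1_atMost_eq[of "\<lambda>j. (real n)\<^sup>2 - (real j)\<^sup>2" m]
    by simp
qed simp

lemma delta_sq_eq_Acoef_Bcoef:
  assumes k: "1 \<le> k" and n: "k < n"
  shows "(delta n k)\<^sup>2 = Acoef n k * Bcoef n k"
proof -
  let ?q = "\<lambda>j. (real n)\<^sup>2 - (real j)\<^sup>2"
  define d where "d = real (dfact (2 * k - 1))"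
  define Q where "Q M = (\<Prod>j = 1..M. ?q j)" for M
  define R where "R M = (\<Prod>j = M + 1..k - 1. ?q j)" for M
  have QR: "Q M * R M = (\<Prod>j = 1..k - 1. ?q j)" if "M < k" for M
  proof -
    have "{1..k - 1} = {1..M} \<union> {M + 1..k - 1}" "{1..M} \<inter> {M + 1..k - 1} = {}" using that by auto
    then show ?thesis unfolding Q_def R_def by (simp add: prod.union_disjoint)
  qed
  have pos: "0 < d" "0 < Q M" "0 < R M" "0 < real n" "0 < real k" if "M < k" for M
    using that k n prod_square_diff_pos[OF k, of n] unfolding d_def Q_def R_def
    by (auto simp: dfact_pos intro!: prod_pos power_strict_mono)
  have T: "chebD n k 1 = (real n)\<^sup>2 * (Q M * R M) / d" if "M < k" for M
    unfolding chebD_at_1 prod_lessThan_square_diff[OF k] QR[OF that] d_def ..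
  have "(delta n k)\<^sup>2 = (\<Sum>M<k. (real n)\<^sup>2 * (ccoef M k * R M * ((real n)\<^sup>2 / (real k)\<^sup>2) ^ (k + M))
      / (chebD n k 1)\<^sup>2)"
  proof -
    have "- 1 < xk n k" "xk n k < 1" using xk_bounds[OF k n] by auto
    then have "envelope n k (xk n k) = (real n)\<^sup>2 * envelope_poly n k (csc2 (xk n k))"
      using k n by (intro envelope_eq_envelope_poly) auto
    then show ?thesis
      unfolding delta_sq_eq_envelope[OF k n]
      by (simp add: envelope_poly_def csc2_xk[OF k n] env_coeff_def R_def sum_distrib_left
          sum_divide_distrib)
  qed
  also have "\<dots> = (\<Sum>M<k. d\<^sup>2 / (real k) ^ (2 * k)
      * (ccoef M k / (real k) ^ (2 * M) * ((real n) ^ (2 * M) / Q M))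
      * ((real n) ^ (2 * k) / ((real n)\<^sup>2 * (Q M * R M))))"
  proof (rule sum.cong[OF refl])
    fix M assume "M \<in> {..<k}"
    then have M: "M < k" by simp
    have "((real n)\<^sup>2 / (real k)\<^sup>2) ^ (k + M)
        = (real n) ^ (2 * k) * (real n) ^ (2 * M) / ((real k) ^ (2 * k) * (real k) ^ (2 * M))"
      by (simp add: power_divide power_add power_mult[symmetric] mult.commute)
    then show "(real n)\<^sup>2 * (ccoef M k * R M * ((real n)\<^sup>2 / (real k)\<^sup>2) ^ (k + M)) / (chebD n k 1)\<^sup>2
      = d\<^sup>2 / (real k) ^ (2 * k) * (ccoef M k / (real k) ^ (2 * M) * ((real n) ^ (2 * M) / Q M))
        * ((real n) ^ (2 * k) / ((real n)\<^sup>2 * (Q M * R M)))"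
      unfolding T[OF M] using pos[OF M] by (simp add: field_simps power2_eq_square)
  qed
  also have "\<dots> = Acoef n k * Bcoef n k"
    unfolding Acoef_def Bcoef_def d_def[symmetric] sum_distrib_left sum_distrib_right lessThan_atLeast0
  proof (intro sum.cong refl)
    fix M assume "M \<in> {0..<k}"
    then have "Q M * R M = (\<Prod>j = 1..k - 1. ?q j)" by (simp add: QR)
    then show "d\<^sup>2 / real k ^ (2 * k) * (ccoef M k / real k ^ (2 * M) * (real n ^ (2 * M) / Q M))
        * (real n ^ (2 * k) / ((real n)\<^sup>2 * (Q M * R M)))
      = d\<^sup>2 / real k ^ (2 * k) * (ccoef M k / real k ^ (2 * M) * (real n ^ (2 * M) / (\<Prod>j = 1..M. ?q j)))
        * (real n ^ (2 * k) / ((real n)\<^sup>2 * (\<Prod>j = 1..k - 1. ?q j)))"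
      by (simp only: Q_def)
  qed
  finally show ?thesis .
qed

section \<open>The largest zero of T_n^(k+1)\<close>

lemma weighted_chebD_has_real_derivative:
  assumes x: "- 1 < x" "x < 1"
  shows "((\<lambda>x. (1 - x\<^sup>2) ^ Suc k * sqrt (1 - x\<^sup>2) * chebD n (Suc (Suc k)) x) has_real_derivative
    - ((real n)\<^sup>2 - (real (Suc k))\<^sup>2) * (1 - x\<^sup>2) ^ k * sqrt (1 - x\<^sup>2) * chebD n (Suc k) x) (at x)"
proof -
  define w where "w = 1 - x\<^sup>2"
  define s where "s = sqrt w"
  have s: "0 < s" "s * s = w" using one_minus_square_pos[OF x] by (simp_all add: s_def w_def)
  have w': "((\<lambda>x. 1 - x\<^sup>2) has_real_derivative - 2 * x) (at x)"
    by (auto intro!: derivative_eq_intros)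
  let ?E = "(real (Suc k) * (- 2 * x * w ^ (Suc k - Suc 0)) * s + (- x / s) * w ^ Suc k)
      * chebD n (Suc (Suc k)) x + chebD n (Suc (Suc (Suc k))) x * (w ^ Suc k * s)"
  from DERIV_mult[OF DERIV_mult[OF DERIV_power[OF w', of "Suc k"]
        sqrt_one_minus_square_has_real_derivative[OF x]] chebD_has_real_derivative[of n "Suc (Suc k)" x]]
  have D: "((\<lambda>x. (1 - x\<^sup>2) ^ Suc k * sqrt (1 - x\<^sup>2) * chebD n (Suc (Suc k)) x)
      has_real_derivative ?E) (at x)"
    by (simp only: s_def w_def)
  have "(- x / s) * w ^ Suc k = - x * s * w ^ k" using s by (simp add: field_simps)
  then have "?E = s * w ^ k * (w * chebD n (Suc (Suc (Suc k))) x
      - (2 * real k + 3) * x * chebD n (Suc (Suc k)) x)"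
    by (simp add: algebra_simps)
  also have "w * chebD n (Suc (Suc (Suc k))) x - (2 * real k + 3) * x * chebD n (Suc (Suc k)) x
      = - ((real n)\<^sup>2 - (real (Suc k))\<^sup>2) * chebD n (Suc k) x"
    using chebD_ode[of x n "Suc k"] by (simp add: w_def algebra_simps)
  finally have "?E = - ((real n)\<^sup>2 - (real (Suc k))\<^sup>2) * w ^ k * s * chebD n (Suc k) x"
    by (simp only: mult_ac)
  then show ?thesis using D by (simp only: s_def w_def)
qed

text \<open>If T_n^(k+1) had no zero, it would be positive on (-1, 1); but by Rolle's theorem the
  derivative above vanishes somewhere in (-1, 1).\<close>
lemma chebD_has_zero:
  assumes n: "k + 2 \<le> n"
  shows "\<exists>x. chebD n (Suc k) x = 0"
proof (rule ccontr)
  assume no_zero: "\<nexists>x. chebD n (Suc k) x = 0"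
  have pos: "chebD n (Suc k) y > 0" if "- 1 < y" "y < 1" for y
  proof (rule ccontr)
    assume "\<not> chebD n (Suc k) y > 0"
    moreover have "chebD n (Suc k) 1 > 0" using chebD_at_1_pos[of "Suc k" n] n by simp
    ultimately have "\<exists>w. chebD n (Suc k) w = 0"
      using IVT'[of "chebD n (Suc k)" y 0 1] that continuous_on_chebD by auto
    then show False using no_zero by blast
  qed
  define q where "q = (\<lambda>x. (1 - x\<^sup>2) ^ Suc k * sqrt (1 - x\<^sup>2) * chebD n (Suc (Suc k)) x)"
  have "continuous_on {-1..1} q"
    unfolding q_def by (intro continuous_intros continuous_on_chebD)
  moreover have "q differentiable (at x)" if "- 1 < x" "x < 1" for x
    using weighted_chebD_has_real_derivative[OF that] unfolding q_def real_differentiable_def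
    by blast
  moreover have "q (- 1) = q 1" by (simp add: q_def)
  ultimately obtain z where z: "- 1 < z" "z < 1" and q': "(q has_real_derivative 0) (at z)"
    using Rolle[of "- 1" 1 q] by force
  have "(real n)\<^sup>2 - (real (Suc k))\<^sup>2 > 0" using n by (simp add: power_strict_mono)
  then have "((real n)\<^sup>2 - (real (Suc k))\<^sup>2) * (1 - z\<^sup>2) ^ k * sqrt (1 - z\<^sup>2) * chebD n (Suc k) z > 0"
    using one_minus_square_pos[OF z] pos[OF z] by simp
  then show False
    using DERIV_unique[OF q' weighted_chebD_has_real_derivative[OF z, of k n, folded q_def]]
    unfolding mult_minus_left by linarith
qed

lemma increase_after_zero_of_increasing_derivative:
  fixes F f :: "real \<Rightarrow> real"
  assumes F': "\<And>x. (F has_real_derivative f x) (at x)"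
    and "f c = 0" and f': "(f has_real_derivative f') (at c)" "f' > 0" and "c < b"
  obtains y where "c < y" "y \<le> b" "F c < F y"
proof -
  obtain d where d: "d > 0" "\<And>h. 0 < h \<Longrightarrow> h < d \<Longrightarrow> f c < f (c + h)"
    using DERIV_pos_inc_right[OF f'] by blast
  define h where "h = min d (b - c) / 2"
  have h: "0 < h" "h < d" "c + h \<le> b" using d \<open>c < b\<close> by (auto simp: h_def min_def divide_simps)
  obtain \<xi> where \<xi>: "c < \<xi>" "\<xi> < c + h" and "F (c + h) - F c = h * f \<xi>"
    using MVT2[of c "c + h" F f] F' h by auto
  moreover have "f \<xi> > 0" using d(2)[of "\<xi> - c"] \<xi> h \<open>f c = 0\<close> by simp
  then have "h * f \<xi> > 0" using h by simp
  ultimately show ?thesis using that[of "c + h"] h by simp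
qed

lemma chebD_Suc_critical_deriv_pos:
  assumes k: "1 \<le> k" and n: "k + 2 \<le> n" and c: "xk n k < c" "c < 1" and pos: "chebD n (Suc k) c > 0"
    and crit: "(1 - c\<^sup>2) * chebD n (Suc (Suc k)) c = (real k + 1) * c * chebD n (Suc k) c"
  shows "- (real k + 1) * (chebD n (Suc k) c + c * chebD n (Suc (Suc k)) c)
    - 2 * c * chebD n (Suc (Suc k)) c
    + (1 - c\<^sup>2) * chebD n (Suc (Suc (Suc k))) c > 0"
proof -
  define w where "w = 1 - c\<^sup>2"
  let ?p = "chebD n (Suc k) c" and ?p' = "chebD n (Suc (Suc k)) c"
    and ?p'' = "chebD n (Suc (Suc (Suc k))) c"
  have "w * ?p'' = (2 * real k + 3) * c * ?p' - ((real n)\<^sup>2 - (real k + 1)\<^sup>2) * ?p"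
    using chebD_ode[of c n "Suc k"] by (simp add: w_def algebra_simps)
  with crit have key: "w * (- (real k + 1) * (?p + c * ?p') - 2 * c * ?p' + w * ?p'')
      = ?p * (real k * (real k + 1) - (real n)\<^sup>2 * w)"
    unfolding w_def[symmetric] by (simp add: w_def) algebra
  have "0 < xk n k" "(xk n k)\<^sup>2 = 1 - (real k)\<^sup>2 / (real n)\<^sup>2"
    using xk_bounds[OF k, of n] n by auto
  then have "(xk n k)\<^sup>2 < c\<^sup>2" using power_strict_mono[OF c(1), of 2] by simp
  then have "(real n)\<^sup>2 * w < (real k)\<^sup>2"
    using \<open>(xk n k)\<^sup>2 = _\<close> n by (simp add: w_def field_simps)
  then have "real k * (real k + 1) - (real n)\<^sup>2 * w > 0"
    by (simp add: power2_eq_square algebra_simps)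
  then have "w * (- (real k + 1) * (?p + c * ?p') - 2 * c * ?p' + w * ?p'') > 0"
    unfolding key using pos by simp
  moreover have "w > 0" using c \<open>0 < xk n k\<close> one_minus_square_pos[of c] by (simp add: w_def)
  ultimately show ?thesis by (simp add: w_def zero_less_mult_iff)
qed

lemma chebD_pos_above_largest_zero:
  assumes "j \<le> n" and largest: "\<And>y. chebD n j y = 0 \<Longrightarrow> y \<le> z" and "z < y"
  shows "chebD n j y > 0"
proof (rule ccontr)
  assume "\<not> chebD n j y > 0"
  moreover have "chebD n j (max y 1) > 0" using chebD_pos[OF \<open>j \<le> n\<close>] by simp
  ultimately obtain w where "y \<le> w" "chebD n j w = 0"
    using IVT'[of "chebD n j" y 0 "max y 1"] continuous_on_chebD by force
  then show False using largest[of w] \<open>z < y\<close> by simp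
qed

lemma weighted_square_chebD_has_real_derivative:
  "((\<lambda>x. (1 - x\<^sup>2) ^ Suc k * (chebD n (Suc k) x)\<^sup>2) has_real_derivative
    2 * ((1 - x\<^sup>2) ^ k * chebD n (Suc k) x)
      * (- (real k + 1) * x * chebD n (Suc k) x + (1 - x\<^sup>2) * chebD n (Suc (Suc k)) x)) (at x)"
proof -
  have "((\<lambda>x. 1 - x\<^sup>2) has_real_derivative - 2 * x) (at x)"
    by (auto intro!: derivative_eq_intros)
  from DERIV_mult[OF DERIV_power[OF this, where n = "Suc k"]
      DERIV_power[OF chebD_has_real_derivative[of n "Suc k" x], where n = 2]]
  show ?thesis by (simp add: algebra_simps power2_eq_square)
qed

lemma interior_maximum:
  fixes F :: "real \<Rightarrow> real"
  assumes "continuous_on {a..b} F" "F a = 0" "F b = 0" "a < m" "m < b" "F m > 0"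
  obtains c where "a < c" "c < b" "\<And>y. y \<in> {a..b} \<Longrightarrow> F y \<le> F c"
proof -
  obtain c where c: "c \<in> {a..b}" and c_max: "\<And>y. y \<in> {a..b} \<Longrightarrow> F y \<le> F c"
    using continuous_attains_sup[of "{a..b}" F] assms by auto
  have "F c > 0" using c_max[of m] assms by simp
  then have "a < c" "c < b" using c assms by (auto simp: less_le)
  then show ?thesis using that c_max by blast
qed

text \<open>If some zero z were >= x_k, the weight (1 - x^2)^(k+1) (T_n^(k+1))^2, which vanishes at z
  and at 1, would attain an interior maximum at some c > x_k. There the second factor of its
  derivative vanishes and has positive derivative (by the differential equation, as c > x_k), so
  the weight still increases to the right of c.\<close>
lemma largest_zero_chebD_Suc_less_xk:
  assumes k: "1 \<le> k" and n: "k + 2 \<le> n"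
    and z: "chebD n (Suc k) z = 0" and largest: "\<And>y. chebD n (Suc k) y = 0 \<Longrightarrow> y \<le> z"
  shows "z < xk n k"
proof (rule ccontr)
  assume "\<not> z < xk n k"
  then have zx: "xk n k \<le> z" by simp
  let ?p = "chebD n (Suc k)"
  define F where "F x = (1 - x\<^sup>2) ^ Suc k * (?p x)\<^sup>2" for x
  define H where "H x = 2 * ((1 - x\<^sup>2) ^ k * ?p x)" for x
  define G where "G x = - (real k + 1) * x * ?p x + (1 - x\<^sup>2) * chebD n (Suc (Suc k)) x" for x
  define G' where "G' x = - (real k + 1) * (?p x + x * chebD n (Suc (Suc k)) x)
    - 2 * x * chebD n (Suc (Suc k)) x + (1 - x\<^sup>2) * chebD n (Suc (Suc (Suc k))) x" for x
  have F': "(F has_real_derivative H x * G x) (at x)" for x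
    unfolding F_def[abs_def] H_def G_def by (rule weighted_square_chebD_has_real_derivative)
  have p_pos: "?p y > 0" if "z < y" for y
    using chebD_pos_above_largest_zero[of "Suc k" n z y] n largest that by simp
  have "0 < xk n k" using xk_bounds[OF k, of n] n by simp
  have "z < 1" using chebD_pos[of "Suc k" n z] n z by (cases "1 \<le> z") auto
  have mid: "z < (z + 1) / 2" "(z + 1) / 2 < 1" using \<open>z < 1\<close> by simp_all
  then have "F ((z + 1) / 2) > 0"
    using one_minus_square_pos[of "(z + 1) / 2"] p_pos[of "(z + 1) / 2"] zx \<open>0 < xk n k\<close>
    by (simp add: F_def)
  moreover have "continuous_on {z..1} F"
    unfolding F_def[abs_def] by (intro continuous_intros continuous_on_chebD)
  moreover have "F z = 0" "F 1 = 0" by (simp_all add: F_def z)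
  ultimately obtain c where zc: "z < c" and c1: "c < 1"
    and c_max: "\<And>y. y \<in> {z..1} \<Longrightarrow> F y \<le> F c"
    using interior_maximum[of z 1 F "(z + 1) / 2"] mid by blast
  have "0 < 1 - c\<^sup>2" using one_minus_square_pos[of c] zc c1 zx \<open>0 < xk n k\<close> by simp
  then have Hc: "H c > 0" using p_pos[OF zc] by (simp add: H_def)
  have "H c * G c = 0"
  proof (rule DERIV_local_max[OF F'])
    show "0 < min (c - z) (1 - c)" using zc c1 by simp
    show "\<forall>y. \<bar>c - y\<bar> < min (c - z) (1 - c) \<longrightarrow> F y \<le> F c"
      using c_max by (auto simp: abs_less_iff)
  qed
  then have Gc: "G c = 0" using Hc by simp
  have "((\<lambda>x. 1 - x\<^sup>2) has_real_derivative - 2 * c) (at c)"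
    by (auto intro!: derivative_eq_intros)
  then obtain H' where "(H has_real_derivative H') (at c)"
    unfolding H_def[abs_def]
    using DERIV_cmult[OF DERIV_mult[OF DERIV_power chebD_has_real_derivative]] by blast
  moreover have "(G has_real_derivative G' c) (at c)"
    unfolding G_def[abs_def] G'_def
    by (auto intro!: derivative_eq_intros chebD_has_real_derivative simp: algebra_simps)
  ultimately have D: "((\<lambda>x. H x * G x) has_real_derivative H' * G c + G' c * H c) (at c)"
    by (rule DERIV_mult)
  have "(1 - c\<^sup>2) * chebD n (Suc (Suc k)) c = (real k + 1) * c * ?p c"
    using Gc unfolding G_def by (simp add: algebra_simps)
  then have "G' c > 0" unfolding G'_def
    using zc zx by (intro chebD_Suc_critical_deriv_pos[OF k n _ c1 p_pos[OF zc]]) simp_all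
  with Hc have "G' c * H c > 0" by simp
  then obtain y where "c < y" "y \<le> 1" "F c < F y"
    using increase_after_zero_of_increasing_derivative[OF F' _ D _ c1] Gc by (simp add: Gc) blast
  then show False using c_max[of y] zc by simp
qed

lemma omega_largest_zero:
  assumes n: "k + 2 \<le> n"
  shows "chebD n (Suc k) (omega n k) = 0" "\<And>y. chebD n (Suc k) y = 0 \<Longrightarrow> y \<le> omega n k"
proof -
  let ?Z = "{x. chebD n (Suc k) x = 0}"
  have omega: "omega n k = Max ?Z" by (simp add: omega_def chebD_def)
  have "(pderiv ^^ Suc k) (cheb n) \<noteq> 0"
    using chebD_at_1_pos[of "Suc k" n] n by (auto simp: chebD_def)
  then have "finite ?Z" unfolding chebD_def by (rule poly_roots_finite)
  moreover have "?Z \<noteq> {}" using chebD_has_zero[OF n] by auto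
  ultimately show "chebD n (Suc k) (omega n k) = 0" "\<And>y. chebD n (Suc k) y = 0 \<Longrightarrow> y \<le> omega n k"
    unfolding omega using Max_in by auto
qed

lemma omega_nonneg: "k + 2 \<le> n \<Longrightarrow> 0 \<le> omega n k"
  using omega_largest_zero[of k n] chebD_minus[of n "Suc k" "omega n k"] by force

lemma omega_less_xk: "1 \<le> k \<Longrightarrow> k + 2 \<le> n \<Longrightarrow> omega n k < xk n k"
  using largest_zero_chebD_Suc_less_xk omega_largest_zero by blast

section \<open>Monotonicity of the envelope and the main result\<close>

lemma envelope_poly_strict_mono:
  assumes k: "1 \<le> k" "k \<le> n" and y: "0 < y\<^sub>1" "y\<^sub>1 < y\<^sub>2"
  shows "envelope_poly n k y\<^sub>1 < envelope_poly n k y\<^sub>2"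
  unfolding envelope_poly_def
proof (rule sum_strict_mono_ex1)
  show "\<forall>M\<in>{..<k}. env_coeff n M k * y\<^sub>1 ^ (k + M) \<le> env_coeff n M k * y\<^sub>2 ^ (k + M)"
    using env_coeff_nonneg[OF k(2)] y by (auto intro!: mult_left_mono power_mono)
  have "y\<^sub>1 ^ k < y\<^sub>2 ^ k" using y k by (simp add: power_strict_mono)
  then show "\<exists>M\<in>{..<k}. env_coeff n M k * y\<^sub>1 ^ (k + M) < env_coeff n M k * y\<^sub>2 ^ (k + M)"
    using env_coeff_0_pos[OF k] k by (intro bexI[of _ 0]) auto
qed simp

lemma csc2_strict_mono: "0 \<le> x \<Longrightarrow> x < x' \<Longrightarrow> x' < 1 \<Longrightarrow> csc2 x < csc2 x'"
  unfolding csc2_def using one_minus_square_pos[of x'] power_strict_mono[of x x' 2]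
  by (simp add: divide_strict_left_mono)

lemma envelope_strict_mono:
  assumes "1 \<le> k" "k \<le> n" "0 \<le> x" "x < x'" "x' < 1"
  shows "envelope n k x < envelope n k x'"
proof -
  have "0 < csc2 x" unfolding csc2_def using assms one_minus_square_pos[of x] by simp
  then show ?thesis
    using assms envelope_eq_envelope_poly[of n k] envelope_poly_strict_mono csc2_strict_mono by simp
qed

theorem lemma4p3:
  fixes n k :: nat
  assumes "k \<ge> 1" and "n \<ge> k + 2"
  shows "(tau n k)\<^sup>2 < (delta n k)\<^sup>2 \<and> (delta n k)\<^sup>2 = Acoef n k * Bcoef n k"
proof
  have k: "1 \<le> k" and n: "k + 2 \<le> n" and kn: "k < n" using assms by auto
  show "(delta n k)\<^sup>2 = Acoef n k * Bcoef n k" by (rule delta_sq_eq_Acoef_Bcoef[OF k kn])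
  have "chebD n k 1 > 0" using chebD_at_1_pos[of k n] n by simp
  then have "(tau n k)\<^sup>2 = (chebD n k (omega n k))\<^sup>2 / (chebD n k 1)\<^sup>2"
    by (simp add: tau_def power_divide)
  also have "\<dots> \<le> envelope n k (omega n k) / (chebD n k 1)\<^sup>2"
    by (simp add: envelope_def divide_right_mono)
  also have "\<dots> < envelope n k (xk n k) / (chebD n k 1)\<^sup>2"
    using envelope_strict_mono[OF k _ omega_nonneg[OF n] omega_less_xk[OF k n]] xk_bounds[OF k kn]
      \<open>chebD n k 1 > 0\<close> n by (simp add: divide_strict_right_mono)
  also have "\<dots> = (delta n k)\<^sup>2" by (rule delta_sq_eq_envelope[OF k kn, symmetric])
  finally show "(tau n k)\<^sup>2 < (delta n k)\<^sup>2" .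
qed

end
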